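(* Let $\mathbb{F}_q$ be a finite field, $\mathcal{C}\subseteq\mathbb{F}_q^n$ a linear $[n,k]$ code with dual code $\mathcal{C}^\perp$, and $\mathbb{P}$ a poset on $[n]=\{1,\dots,n\}$ with dual poset $\widetilde{\mathbb{P}}$. Let $A=\{d_r^{\mathbb{P}}(\mathcal{C}):1\le r\le k\}$ and $B=\{n+1-d_s^{\widetilde{\mathbb{P}}}(\mathcal{C}^\perp):1\le s\le n-k\}$. Then $A$ and $B$ are disjoint and $[n]=A\cup B$.
   Context: The dual poset $\widetilde{\mathbb{P}}$ has $i\le_{\widetilde{\mathbb{P}}}j$ iff $j\le_{\mathbb{P}}i$. For $J\subseteq[n]$, $\langle J\rangle_{\mathbb{P}}=\{i:i\le_{\mathbb{P}}j\text{ for some }j\in J\}$, and similarly for $\widetilde{\mathbb{P}}$. For $u\in\mathbb{F}_q^n$, $\mathrm{supp}(u)=\{i:u_i\ne0\}$; for $D\subseteq\mathbb{F}_q^n$, $\mathrm{supp}(D)=\bigcup_{u\in D}\mathrm{supp}(u)$ and $w_{\mathbb{P}}(D)=|\langle\mathrm{supp}(D)\rangle_{\mathbb{P}}|$. The $r$-th generalized minimum $\mathbb{P}$-weight is $d_r^{\mathbb{P}}(\mathcal{C})=\min\{w_{\mathbb{P}}(D): D \text{ an } r\text{-dimensional subspace of }\mathcal{C}\}$, and $d_s^{\widetilde{\mathbb{P}}}(\mathcal{C}^\perp)=\min\{w_{\widetilde{\mathbb{P}}}(D): D \text{ an } s\text{-dimensional subspace of }\mathcal{C}^\perp\}$. 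*)

theory Defs
  imports Complex_Main "HOL-Library.Function_Algebras"
begin

text \<open>Vectors of F_q^n are modelled as functions nat => 'a vanishing outside [n] = {1..n}.\<close>

definition fscale :: "'a::field \<Rightarrow> (nat \<Rightarrow> 'a) \<Rightarrow> (nat \<Rightarrow> 'a)" where
  "fscale c v = (\<lambda>i. c * v i)"

definition ambient :: "nat \<Rightarrow> (nat \<Rightarrow> 'a::zero) set" where
  "ambient n = {v. \<forall>i. i \<notin> {1..n} \<longrightarrow> v i = 0}"

definition linear_code :: "nat \<Rightarrow> (nat \<Rightarrow> 'a::field) set \<Rightarrow> bool" where
  "linear_code n C \<longleftrightarrow> module.subspace fscale C \<and> C \<subseteq> ambient n"

definition code_dim :: "(nat \<Rightarrow> 'a::field) set \<Rightarrow> nat" where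
  "code_dim D = vector_space.dim fscale D"

definition dual_code :: "nat \<Rightarrow> (nat \<Rightarrow> 'a::field) set \<Rightarrow> (nat \<Rightarrow> 'a) set" where
  "dual_code n C = {u \<in> ambient n. \<forall>c\<in>C. (\<Sum>i=1..n. u i * c i) = 0}"

definition supp :: "(nat \<Rightarrow> 'a::zero) \<Rightarrow> nat set" where
  "supp u = {i. u i \<noteq> 0}"

definition supp_set :: "(nat \<Rightarrow> 'a::zero) set \<Rightarrow> nat set" where
  "supp_set D = (\<Union>u\<in>D. supp u)"

text \<open>Ideal generated by J in the poset given by the order relation R ((i,j) \<in> R means i \<le> j).\<close>
definition ideal_gen :: "nat rel \<Rightarrow> nat set \<Rightarrow> nat set" where
  "ideal_gen R J = {i. \<exists>j\<in>J. (i, j) \<in> R}"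

definition poset_weight :: "nat rel \<Rightarrow> (nat \<Rightarrow> 'a::zero) set \<Rightarrow> nat" where
  "poset_weight R D = card (ideal_gen R (supp_set D))"

definition gen_min_weight :: "nat rel \<Rightarrow> (nat \<Rightarrow> 'a::field) set \<Rightarrow> nat \<Rightarrow> nat" where
  "gen_min_weight R C r =
     Min {poset_weight R D | D. module.subspace fscale D \<and> D \<subseteq> C \<and> code_dim D = r}"

end

theory Submission
  imports Defs "HOL-Library.FuncSet" "HOL-Library.Cardinality"
begin

text \<open>The r-th generalized weight of a code V is the least size of an order ideal I with
  dim (V \<inter> F^I) \<ge> r; removing a maximal element of I lowers that dimension by at most one, so
  the weights strictly increase with r.  Counting over the finite field gives the duality
  dim (C^\<bottom> \<inter> F^J) + k = |J| + dim (C \<inter> F^([n] - J)), and since complements of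
  P-ideals are dual-poset ideals, applying it to ideals attaining d_r(C) and d_s(C^\<bottom>)
  shows d_r(C) + d_s(C^\<bottom>) \<noteq> n + 1.  The k values of A and the n - k values of B are
  therefore distinct elements of [n].\<close>

interpretation fs: vector_space "fscale :: 'a::field \<Rightarrow> (nat \<Rightarrow> 'a) \<Rightarrow> _"
  by unfold_locales (auto simp: fscale_def algebra_simps fun_eq_iff)

definition supported_on :: "'i set \<Rightarrow> ('i \<Rightarrow> 'a::zero) set" where
  "supported_on S = {v. \<forall>i. i \<notin> S \<longrightarrow> v i = 0}"

lemma ambient_eq_supported_on: "ambient n = supported_on {1..n}"
  by (simp add: ambient_def supported_on_def)

lemma supported_on_mono: "S \<subseteq> T \<Longrightarrow> supported_on S \<subseteq> supported_on T"
  by (auto simp: supported_on_def)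

lemma subspace_supported_on: "fs.subspace (supported_on S)"
  by (simp add: fs.subspace_def supported_on_def fscale_def)

lemma subspace_inter_supported_on_empty: "fs.subspace V \<Longrightarrow> V \<inter> supported_on {} = {0}"
  using fs.subspace_0 by (auto simp: supported_on_def fun_eq_iff)

lemma card_supported_on:
  assumes "finite S"
  shows "card (supported_on S :: ('i \<Rightarrow> 'a::{finite,zero}) set) = CARD('a) ^ card S"
proof -
  have "bij_betw (\<lambda>v. restrict v S) (supported_on S :: ('i \<Rightarrow> 'a) set) (PiE S (\<lambda>_. UNIV))"
    by (rule bij_betwI[where g = "\<lambda>g i. if i \<in> S then g i else 0"])
      (auto simp: supported_on_def fun_eq_iff PiE_def extensional_def)
  then show ?thesis
    using assms by (simp add: bij_betw_same_card card_PiE)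
qed

lemma finite_supported_on:
  assumes "finite S"
  shows "finite (supported_on S :: ('i \<Rightarrow> 'a::{finite,zero}) set)"
proof -
  have "card (supported_on S :: ('i \<Rightarrow> 'a) set) > 0"
    using assms by (simp add: card_supported_on)
  then show ?thesis by (rule card_ge_0_finite)
qed

lemma supp_set_subset_iff: "supp_set D \<subseteq> I \<longleftrightarrow> D \<subseteq> supported_on I"
  by (auto simp: supp_set_def supp_def supported_on_def)

lemma one_less_card_field: "1 < CARD('a::{finite,field})"
proof -
  have "card {0::'a, 1} \<le> CARD('a)" by (rule card_mono) auto
  then show ?thesis by simp
qed

lemma card_subspace_eq_card_image_mult_card_kernel:
  fixes f :: "(nat \<Rightarrow> 'a::field) \<Rightarrow> 'b::ab_group_add"
  assumes V: "fs.subspace V" "finite V" and f_diff: "\<And>x y. f (x - y) = f x - f y"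
  shows "card V = card (f ` V) * card {v \<in> V. f v = 0}"
proof -
  let ?K = "{v \<in> V. f v = 0}"
  have fibre: "{v \<in> V. f v = f x} = (+) x ` ?K" if "x \<in> V" for x
  proof (intro set_eqI iffI)
    fix v assume "v \<in> {v \<in> V. f v = f x}"
    then have "v - x \<in> ?K" using f_diff[of v x] fs.subspace_diff[OF V(1) _ that] by auto
    then show "v \<in> (+) x ` ?K" by (rule rev_image_eqI) simp
  next
    fix v assume "v \<in> (+) x ` ?K"
    then obtain w where "w \<in> V" "f w = 0" "v = x + w" by auto
    then show "v \<in> {v \<in> V. f v = f x}"
      using f_diff[of v w] fs.subspace_add[OF V(1) that] by auto
  qed
  have "card V = card (\<Union>z\<in>f ` V. {v \<in> V. f v = z})" by (rule arg_cong[where f = card]) auto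
  also have "\<dots> = (\<Sum>z\<in>f ` V. card {v \<in> V. f v = z})"
    using V(2) by (intro card_UN_disjoint) auto
  also have "\<dots> = (\<Sum>z\<in>f ` V. card ?K)"
  proof (rule sum.cong[OF refl])
    fix z assume "z \<in> f ` V"
    then obtain x where "x \<in> V" "z = f x" by auto
    then show "card {v \<in> V. f v = z} = card ?K"
      using fibre by (simp add: card_image inj_on_def)
  qed
  finally show ?thesis by simp
qed

lemma card_subspace:
  fixes V :: "(nat \<Rightarrow> 'a::{finite,field}) set"
  assumes V: "fs.subspace V" "finite V"
  shows "card V = CARD('a) ^ fs.dim V"
proof -
  obtain B where B: "B \<subseteq> V" "fs.independent B" "V \<subseteq> fs.span B" "card B = fs.dim V"
    by (rule fs.basis_exists)
  have "finite B" using B(1) V(2) finite_subset by blast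
  let ?g = "\<lambda>c. \<Sum>b\<in>B. fscale (c b) b"
  have "bij_betw ?g (PiE B (\<lambda>_. UNIV)) V"
  proof (rule bij_betw_imageI)
    show "inj_on ?g (PiE B (\<lambda>_. UNIV))"
    proof (rule inj_onI)
      fix c c' assume c: "c \<in> PiE B (\<lambda>_. UNIV)" "c' \<in> PiE B (\<lambda>_. UNIV)" and "?g c = ?g c'"
      then have "(\<Sum>b\<in>B. fscale (c b - c' b) b) = 0"
        by (simp add: fs.scale_left_diff_distrib sum_subtractf)
      then have "\<forall>b\<in>B. c b - c' b = 0"
        using fs.dependent_finite[OF \<open>finite B\<close>, THEN iffD2, OF exI[of _ "\<lambda>b. c b - c' b"]] B(2)
        by blast
      with c show "c = c'" by (auto intro: PiE_ext)
    qed
    have "?g ` PiE B (\<lambda>_. UNIV) = range ?g"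
    proof (intro subset_antisym subsetI)
      fix v assume "v \<in> range ?g"
      then obtain c where "v = ?g c" by blast
      also have "?g c = ?g (restrict c B)" by (rule sum.cong) simp_all
      finally show "v \<in> ?g ` PiE B (\<lambda>_. UNIV)" by (rule image_eqI[where x = "restrict c B"]) simp_all
    qed (auto simp del: PiE_UNIV_domain)
    also have "\<dots> = fs.span B" by (rule fs.span_finite[OF \<open>finite B\<close>, symmetric])
    also have "\<dots> = V" using B(1,3) fs.span_minimal[OF B(1) V(1)] by blast
    finally show "?g ` PiE B (\<lambda>_. UNIV) = V" .
  qed
  then have "card V = card (PiE B (\<lambda>_. UNIV :: 'a set))"
    by (simp add: bij_betw_same_card)
  with \<open>finite B\<close> B(4) show ?thesis by (simp add: card_PiE)
qed

lemma dim_subspace_mono: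
  assumes "D \<subseteq> U" "fs.subspace U" "finite U"
  shows "fs.dim D \<le> fs.dim U"
proof -
  obtain B where B: "B \<subseteq> U" "U \<subseteq> fs.span B" "card B = fs.dim U"
    by (rule fs.basis_exists)
  then show ?thesis
    using assms finite_subset fs.dim_le_card[of D B] by (metis subset_trans)
qed

lemma exists_subspace_dim:
  assumes "fs.subspace U" "r \<le> fs.dim U"
  obtains D where "fs.subspace D" "D \<subseteq> U" "fs.dim D = r"
proof -
  obtain B where B: "B \<subseteq> U" "fs.independent B" "card B = fs.dim U"
    by (rule fs.basis_exists)
  obtain B' where B': "B' \<subseteq> B" "card B' = r"
    using obtain_subset_with_card_n assms(2) B(3) by metis
  have "fs.span B' \<subseteq> U"
    using fs.span_minimal[OF _ assms(1)] B'(1) B(1) by blast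
  moreover have "fs.dim (fs.span B') = r"
    using fs.dim_span_eq_card_independent[OF fs.independent_mono[OF B(2) B'(1)]] B'(2) by simp
  ultimately show thesis using that fs.subspace_span by blast
qed

lemma dim_inter_supported_on_empty: "fs.subspace V \<Longrightarrow> fs.dim (V \<inter> supported_on {}) = 0"
proof -
  assume "fs.subspace V"
  then have "V \<inter> supported_on {} = fs.span {}"
    by (simp add: subspace_inter_supported_on_empty fs.span_empty)
  then show ?thesis
    using fs.dim_span_eq_card_independent[OF fs.independent_empty] by simp
qed

definition dot_on :: "nat set \<Rightarrow> (nat \<Rightarrow> 'a::comm_ring) \<Rightarrow> (nat \<Rightarrow> 'a) \<Rightarrow> 'a" where
  "dot_on J u v = (\<Sum>j\<in>J. u j * v j)"

definition orth_on :: "nat set \<Rightarrow> (nat \<Rightarrow> 'a::comm_ring) set \<Rightarrow> (nat \<Rightarrow> 'a) set" where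
  "orth_on J W = {u \<in> supported_on J. \<forall>w\<in>W. dot_on J u w = 0}"

lemma dot_on_add_left: "dot_on J (u + v) w = dot_on J u w + dot_on J v w"
  by (simp add: dot_on_def sum.distrib distrib_right)

lemma dot_on_diff_left: "dot_on J (u - v) w = dot_on J u w - dot_on J v w"
  by (simp add: dot_on_def sum_subtractf left_diff_distrib)

lemma dot_on_scale_left: "dot_on J (fscale c u) w = c * dot_on J u w"
  by (simp add: dot_on_def fscale_def sum_distrib_left mult.assoc)

lemma dot_on_sum_left: "dot_on J (\<Sum>x\<in>S. f x) w = (\<Sum>x\<in>S. dot_on J (f x) w)"
proof (induction S rule: infinite_finite_induct)
  case (insert x F)
  then show ?case by (simp only: sum.insert[OF insert(1,2)] dot_on_add_left)
qed (simp_all add: dot_on_def)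

lemma subspace_dot_on_eq_0: "fs.subspace {w. dot_on J u w = 0}"
  by (simp add: fs.subspace_def dot_on_def fscale_def sum.distrib distrib_left
      mult.left_commute flip: sum_distrib_left)

lemma subspace_orth_on: "fs.subspace (orth_on J W)"
  using subspace_supported_on[of J]
  by (auto simp: fs.subspace_def orth_on_def dot_on_add_left dot_on_scale_left, simp add: dot_on_def)

lemma sum_apply: "(\<Sum>x\<in>S. f x) i = (\<Sum>x\<in>S. f x i)"
  by (induction S rule: infinite_finite_induct) auto

lemma dot_on_unit_left:
  fixes x :: "nat \<Rightarrow> 'a::comm_ring_1"
  assumes "finite J" "j \<in> J"
  shows "dot_on J (\<lambda>i. if i = j then 1 else 0) x = x j"
proof -
  have "dot_on J (\<lambda>i. if i = j then 1 else 0) x = (\<Sum>i\<in>J. if i = j then x j else 0)"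
    unfolding dot_on_def by (rule sum.cong) auto
  with assms show ?thesis by simp
qed

lemma exists_dot_on_separating:
  fixes b :: "nat \<Rightarrow> 'a::field"
  assumes J: "finite J" and B: "finite B" "B \<subseteq> supported_on J"
    and b: "b \<in> supported_on J" "b \<notin> fs.span B"
    and dual: "\<And>t. \<exists>u \<in> supported_on J. \<forall>b'\<in>B. dot_on J u b' = t b'"
  shows "\<exists>k \<in> supported_on J. (\<forall>b'\<in>B. dot_on J k b' = 0) \<and> dot_on J k b \<noteq> 0"
proof (rule ccontr)
  assume "\<not> ?thesis"
  then have orth_b: "dot_on J k b = 0" if "k \<in> supported_on J" "\<forall>b'\<in>B. dot_on J k b' = 0" for k
    using that by blast
  have "\<forall>b'. \<exists>u \<in> supported_on J. \<forall>b''\<in>B. dot_on J u b'' = (if b'' = b' then 1 else 0)"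
    by (intro allI dual)
  then obtain U where U: "\<And>b'. U b' \<in> supported_on J"
    "\<And>b' b''. b'' \<in> B \<Longrightarrow> dot_on J (U b') b'' = (if b'' = b' then 1 else 0)"
    by metis
  \<comment> \<open>Otherwise b is the combination of B with coefficients U b' \<bullet> b: for j \<in> J, the unit vector
    at j corrected along the dual family U is orthogonal to B, hence to b.\<close>
  have coord: "b j = (\<Sum>b'\<in>B. dot_on J (U b') b * b' j)" for j
  proof (cases "j \<in> J")
    case False
    then show ?thesis using b(1) B(2) by (auto simp: supported_on_def intro!: sum.neutral)
  next
    case True
    define e where "e = (\<lambda>i. if i = j then 1 else 0 :: 'a)"
    have dot_e: "dot_on J e x = x j" for x
      unfolding e_def using J True by (rule dot_on_unit_left)
    define k where "k = e - (\<Sum>b'\<in>B. fscale (dot_on J e b') (U b'))"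
    have "k \<in> supported_on J"
      unfolding k_def using True U(1) subspace_supported_on[of J]
      by (intro fs.subspace_diff fs.subspace_sum fs.subspace_scale)
        (auto simp: e_def supported_on_def)
    moreover have "\<forall>b''\<in>B. dot_on J k b'' = 0"
    proof
      fix b'' assume "b'' \<in> B"
      then have "dot_on J k b''
          = dot_on J e b'' - (\<Sum>b'\<in>B. dot_on J e b' * (if b'' = b' then 1 else 0))"
        using U(2) by (simp add: k_def dot_on_diff_left dot_on_sum_left dot_on_scale_left)
      also have "\<dots> = 0" using \<open>b'' \<in> B\<close> B(1) by (simp add: if_distrib cong: if_cong)
      finally show "dot_on J k b'' = 0" .
    qed
    ultimately have "dot_on J k b = 0" by (rule orth_b)
    then show ?thesis
      by (simp add: k_def dot_on_diff_left dot_on_sum_left dot_on_scale_left dot_e mult.commute)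
  qed
  have "b = (\<Sum>b'\<in>B. fscale (dot_on J (U b') b) b')"
    by (simp add: fun_eq_iff sum_apply fscale_def coord)
  also have "\<dots> \<in> fs.span B"
    by (intro fs.span_sum fs.span_scale fs.span_base)
  finally show False using b(2) by contradiction
qed

lemma dot_on_surj_on_independent:
  fixes B :: "(nat \<Rightarrow> 'a::field) set"
  assumes J: "finite J" and B: "finite B" "B \<subseteq> supported_on J" "fs.independent B"
  shows "\<exists>u \<in> supported_on J. \<forall>b\<in>B. dot_on J u b = t b"
  using B
proof (induction B arbitrary: t rule: finite_induct)
  case empty
  then show ?case using fs.subspace_0[OF subspace_supported_on] by blast
next
  case (insert b B)
  then have b: "b \<in> supported_on J" "b \<notin> fs.span B" and B: "B \<subseteq> supported_on J" "fs.independent B"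
    by (simp_all add: fs.independent_insert)
  obtain k where k: "k \<in> supported_on J" "\<forall>b'\<in>B. dot_on J k b' = 0" "dot_on J k b \<noteq> 0"
    using exists_dot_on_separating[OF J insert.hyps(1) B(1) b] insert.IH[OF B] by blast
  obtain u where u: "u \<in> supported_on J" "\<forall>b'\<in>B. dot_on J u b' = t b'"
    using insert.IH[OF B] by blast
  let ?u = "u + fscale ((t b - dot_on J u b) / dot_on J k b) k"
  have "?u \<in> supported_on J"
    using u(1) k(1) subspace_supported_on by (intro fs.subspace_add fs.subspace_scale)
  moreover have "\<forall>b'\<in>insert b B. dot_on J ?u b' = t b'"
    using u(2) k(2,3) by (simp add: dot_on_add_left dot_on_scale_left)
  ultimately show ?case by blast
qed

lemma card_supported_on_eq_card_mult_card_orth_on: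
  fixes W :: "(nat \<Rightarrow> 'a::{finite,field}) set"
  assumes J: "finite J" and W: "fs.subspace W" "W \<subseteq> supported_on J"
  shows "card (supported_on J :: (nat \<Rightarrow> 'a) set) = card W * card (orth_on J W)"
proof -
  have "finite W" using finite_supported_on[OF J] W(2) finite_subset by blast
  obtain B where B: "B \<subseteq> W" "fs.independent B" "W \<subseteq> fs.span B" "card B = fs.dim W"
    by (rule fs.basis_exists)
  have "finite B" using B(1) \<open>finite W\<close> finite_subset by blast
  define \<Phi> where "\<Phi> u = (\<lambda>b. if b \<in> B then dot_on J u b else 0)" for u :: "nat \<Rightarrow> 'a"
  have kernel: "{u \<in> supported_on J. \<Phi> u = 0} = orth_on J W"
  proof -
    have "\<forall>w\<in>W. dot_on J u w = 0" if "\<forall>b\<in>B. dot_on J u b = 0" for u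
      using fs.span_minimal[OF _ subspace_dot_on_eq_0, of B J u] that B(3) by blast
    then show ?thesis using B(1) by (auto simp: orth_on_def \<Phi>_def fun_eq_iff)
  qed
  have image: "\<Phi> ` supported_on J = supported_on B"
  proof
    show "\<Phi> ` supported_on J \<subseteq> supported_on B" by (auto simp: \<Phi>_def supported_on_def)
    show "supported_on B \<subseteq> \<Phi> ` supported_on J"
    proof
      fix t :: "(nat \<Rightarrow> 'a) \<Rightarrow> 'a" assume "t \<in> supported_on B"
      moreover obtain u where "u \<in> supported_on J" "\<forall>b\<in>B. dot_on J u b = t b"
        using dot_on_surj_on_independent[OF J \<open>finite B\<close> _ B(2)] B(1) W(2) by blast
      ultimately show "t \<in> \<Phi> ` supported_on J"
        by (intro image_eqI[of _ _ u]) (auto simp: \<Phi>_def supported_on_def fun_eq_iff)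
    qed
  qed
  have "card (supported_on J :: (nat \<Rightarrow> 'a) set)
      = card (\<Phi> ` supported_on J) * card {u \<in> supported_on J. \<Phi> u = 0}"
    using subspace_supported_on finite_supported_on[OF J]
    by (rule card_subspace_eq_card_image_mult_card_kernel) (simp add: \<Phi>_def dot_on_diff_left fun_eq_iff)
  also have "card (\<Phi> ` supported_on J) = card W"
    using image card_supported_on[OF \<open>finite B\<close>] card_subspace[OF W(1) \<open>finite W\<close>] B(4) by simp
  finally show ?thesis by (simp only: kernel)
qed

lemma dual_code_eq_orth_on: "dual_code n C = orth_on {1..n} C"
  by (simp add: dual_code_def orth_on_def dot_on_def ambient_eq_supported_on)

lemma subspace_dual_code: "fs.subspace (dual_code n C)"
  by (simp add: dual_code_eq_orth_on subspace_orth_on)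

lemma dual_code_subset_supported_on: "dual_code n C \<subseteq> supported_on {1..n}"
  by (auto simp: dual_code_eq_orth_on orth_on_def)

lemma dim_dual_code_inter_supported_on:
  fixes C :: "(nat \<Rightarrow> 'a::{finite,field}) set"
  assumes C: "linear_code n C" and J: "J \<subseteq> {1..n}"
  shows "fs.dim (dual_code n C \<inter> supported_on J) + fs.dim C
    = card J + fs.dim (C \<inter> supported_on ({1..n} - J))"
proof -
  let ?N = "{1..n}" and ?D = "dual_code n C"
  let ?K = "C \<inter> supported_on (?N - J)"
  have C_sub: "fs.subspace C" "C \<subseteq> supported_on ?N"
    using C by (auto simp: linear_code_def ambient_eq_supported_on)
  have fin: "finite C" "finite J" "finite (?D \<inter> supported_on J)"
    using C_sub(2) finite_supported_on[of ?N] finite_subset J finite_supported_on[of J] by auto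
  define \<pi> where "\<pi> v = (\<lambda>i. if i \<in> J then v i else 0)" for v :: "nat \<Rightarrow> 'a"
  have hom: "module_hom fscale fscale \<pi>"
    by (simp add: module_hom_iff fs.module_axioms \<pi>_def fscale_def fun_eq_iff)
  have "card C = card (\<pi> ` C) * card ?K"
  proof -
    have "{v \<in> C. \<pi> v = 0} = ?K"
      using C_sub(2) by (auto simp: \<pi>_def supported_on_def fun_eq_iff)
    then show ?thesis
      using card_subspace_eq_card_image_mult_card_kernel[OF C_sub(1) fin(1), of \<pi>]
      by (simp add: \<pi>_def fun_eq_iff)
  qed
  moreover have "card (supported_on J :: (nat \<Rightarrow> 'a) set) = card (\<pi> ` C) * card (?D \<inter> supported_on J)"
  proof -
    have "dot_on ?N u c = dot_on J u (\<pi> c)" if "u \<in> supported_on J" for u c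
    proof -
      have "dot_on ?N u c = dot_on J u c"
        using J that unfolding dot_on_def by (intro sum.mono_neutral_right) (auto simp: supported_on_def)
      then show ?thesis by (simp add: dot_on_def \<pi>_def)
    qed
    then have "?D \<inter> supported_on J = orth_on J (\<pi> ` C)"
      using supported_on_mono[OF J] by (auto simp: dual_code_eq_orth_on orth_on_def)
    moreover have "\<pi> ` C \<subseteq> supported_on J" by (auto simp: \<pi>_def supported_on_def)
    ultimately show ?thesis
      using card_supported_on_eq_card_mult_card_orth_on[OF fin(2) module_hom.subspace_image[OF hom C_sub(1)]]
      by simp
  qed
  ultimately have "card (?D \<inter> supported_on J) * card C = card (supported_on J :: (nat \<Rightarrow> 'a) set) * card ?K"
    by simp
  moreover have "card (?D \<inter> supported_on J) = CARD('a) ^ fs.dim (?D \<inter> supported_on J)"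
    "card C = CARD('a) ^ fs.dim C" "card ?K = CARD('a) ^ fs.dim ?K"
    "card (supported_on J :: (nat \<Rightarrow> 'a) set) = CARD('a) ^ card J"
    using fin C_sub(1) subspace_supported_on subspace_orth_on
    by (auto intro!: card_subspace card_supported_on fs.subspace_inter simp: dual_code_eq_orth_on)
  ultimately have "CARD('a) ^ (fs.dim (?D \<inter> supported_on J) + fs.dim C)
      = CARD('a) ^ (card J + fs.dim ?K)"
    by (simp add: power_add)
  then show ?thesis using one_less_card_field[where 'a = 'a] by (simp add: power_inject_exp)
qed

lemma dim_dual_code:
  fixes C :: "(nat \<Rightarrow> 'a::{finite,field}) set"
  assumes "linear_code n C"
  shows "fs.dim (dual_code n C) + fs.dim C = n"
proof -
  have "dual_code n C \<inter> supported_on {1..n} = dual_code n C"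
    using dual_code_subset_supported_on by blast
  moreover have "fs.subspace C" using assms by (simp add: linear_code_def)
  ultimately show ?thesis
    using dim_dual_code_inter_supported_on[OF assms order_refl] dim_inter_supported_on_empty by simp
qed

definition order_ideal :: "'i set \<Rightarrow> 'i rel \<Rightarrow> 'i set \<Rightarrow> bool" where
  "order_ideal N R I \<longleftrightarrow> I \<subseteq> N \<and> (\<forall>i j. (i, j) \<in> R \<longrightarrow> j \<in> I \<longrightarrow> i \<in> I)"

lemma order_ideal_Diff_converse:
  "R \<subseteq> N \<times> N \<Longrightarrow> order_ideal N R I \<Longrightarrow> order_ideal N (R\<inverse>) (N - I)"
  unfolding order_ideal_def by blast

lemma order_ideal_ideal_gen: "preorder_on N R \<Longrightarrow> order_ideal N R (ideal_gen R X)"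
  unfolding order_ideal_def ideal_gen_def preorder_on_def by (auto dest: transD)

lemma subset_ideal_gen: "preorder_on N R \<Longrightarrow> X \<subseteq> N \<Longrightarrow> X \<subseteq> ideal_gen R X"
  unfolding ideal_gen_def preorder_on_def refl_on_def by blast

lemma ideal_gen_subset_order_ideal: "order_ideal N R I \<Longrightarrow> X \<subseteq> I \<Longrightarrow> ideal_gen R X \<subseteq> I"
  unfolding order_ideal_def ideal_gen_def by blast

lemma order_ideal_Diff_maximal:
  assumes "order_ideal N R I" "i \<in> I" "\<forall>j\<in>I. (i, j) \<in> R \<longrightarrow> j = i"
  shows "order_ideal N R (I - {i})"
  using assms unfolding order_ideal_def by blast

lemma finite_antisym_trans_has_maximal:
  assumes "finite I" "I \<noteq> {}" "antisym R" "trans R"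
  shows "\<exists>i\<in>I. \<forall>j\<in>I. (i, j) \<in> R \<longrightarrow> j = i"
  using assms(1,2)
proof (induction I rule: finite_ne_induct)
  case (insert x F)
  then obtain m where m: "m \<in> F" "\<forall>j\<in>F. (m, j) \<in> R \<longrightarrow> j = m" by blast
  show ?case
  proof (cases "(m, x) \<in> R")
    case True
    then have "\<forall>j\<in>insert x F. (x, j) \<in> R \<longrightarrow> j = x"
      using m assms(3,4) by (auto dest: transD antisymD)
    then show ?thesis by blast
  next
    case False
    then show ?thesis using m by blast
  qed
qed simp

lemma dim_inter_supported_on_le:
  fixes V :: "(nat \<Rightarrow> 'a::{finite,field}) set"
  assumes V: "fs.subspace V" "finite V" and XY: "Y \<subseteq> X" "finite (X - Y)"
  shows "fs.dim (V \<inter> supported_on X) \<le> fs.dim (V \<inter> supported_on Y) + card (X - Y)"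
proof -
  let ?VX = "V \<inter> supported_on X" and ?VY = "V \<inter> supported_on Y"
  define \<rho> where "\<rho> v = (\<lambda>i. if i \<in> X - Y then v i else 0)" for v :: "nat \<Rightarrow> 'a"
  have sub: "fs.subspace ?VX" "fs.subspace ?VY"
    using V(1) subspace_supported_on by (auto intro: fs.subspace_inter)
  have kernel: "{v \<in> ?VX. \<rho> v = 0} = ?VY"
    using XY(1) by (auto simp: \<rho>_def supported_on_def fun_eq_iff)
  have "card ?VX = card (\<rho> ` ?VX) * card ?VY"
    using card_subspace_eq_card_image_mult_card_kernel[OF sub(1), of \<rho>] V(2) kernel
    by (simp add: \<rho>_def fun_eq_iff)
  also have "\<dots> \<le> card (supported_on (X - Y) :: (nat \<Rightarrow> 'a) set) * card ?VY"
    using finite_supported_on[OF XY(2)]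
    by (intro mult_right_mono card_mono) (auto simp: \<rho>_def supported_on_def)
  finally have "CARD('a) ^ fs.dim ?VX \<le> CARD('a) ^ (fs.dim ?VY + card (X - Y))"
    using card_subspace[OF sub(1)] card_subspace[OF sub(2)] card_supported_on[OF XY(2), where 'a = 'a] V(2)
    by (simp add: power_add mult.commute)
  then show ?thesis using one_less_card_field[where 'a = 'a] by simp
qed

lemma finite_poset_weights:
  assumes "finite N" "R \<subseteq> N \<times> N"
  shows "finite {poset_weight R D | D. P D}"
proof (rule finite_subset)
  show "{poset_weight R D | D. P D} \<subseteq> {..card N}"
    using assms by (auto simp: poset_weight_def ideal_gen_def intro!: card_mono)
qed simp

lemma gen_min_weight_le:
  assumes "finite N" "R \<subseteq> N \<times> N" "fs.subspace D" "D \<subseteq> V" "fs.dim D = r"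
  shows "gen_min_weight R V r \<le> poset_weight R D"
  unfolding gen_min_weight_def code_dim_def using assms by (intro Min_le finite_poset_weights) auto

lemma gen_min_weight_attained:
  assumes "finite N" "R \<subseteq> N \<times> N" "fs.subspace V" "r \<le> fs.dim V"
  obtains D where "fs.subspace D" "D \<subseteq> V" "fs.dim D = r" "gen_min_weight R V r = poset_weight R D"
proof -
  obtain D0 where "fs.subspace D0" "D0 \<subseteq> V" "fs.dim D0 = r"
    using exists_subspace_dim assms(3,4) by blast
  then have "gen_min_weight R V r \<in> {poset_weight R D | D. fs.subspace D \<and> D \<subseteq> V \<and> fs.dim D = r}"
    unfolding gen_min_weight_def code_dim_def using assms(1,2)
    by (intro Min_in finite_poset_weights) auto
  then show thesis using that by blast
qed

lemma gen_min_weight_le_card: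
  fixes V :: "(nat \<Rightarrow> 'a::field) set"
  assumes N: "finite N" "preorder_on N R" and V: "fs.subspace V"
    and I: "order_ideal N R I" "r \<le> fs.dim (V \<inter> supported_on I)"
  shows "gen_min_weight R V r \<le> card I"
proof -
  obtain D where D: "fs.subspace D" "D \<subseteq> V \<inter> supported_on I" "fs.dim D = r"
    using exists_subspace_dim[OF fs.subspace_inter[OF V subspace_supported_on] I(2)] .
  have "R \<subseteq> N \<times> N" using N(2) by (simp add: preorder_on_def)
  then have "gen_min_weight R V r \<le> poset_weight R D"
    using gen_min_weight_le[OF N(1) _ D(1) _ D(3)] D(2) by blast
  also have "\<dots> \<le> card I"
    unfolding poset_weight_def using I(1) N(1) D(2)
    by (intro card_mono ideal_gen_subset_order_ideal)
      (auto simp: order_ideal_def supp_set_subset_iff intro: finite_subset)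
  finally show ?thesis .
qed

lemma gen_min_weight_attained_by_order_ideal:
  fixes V :: "(nat \<Rightarrow> 'a::{finite,field}) set"
  assumes N: "finite N" "preorder_on N R" and V: "fs.subspace V" "V \<subseteq> supported_on N"
    and r: "r \<le> fs.dim V"
  obtains I where "order_ideal N R I" "card I = gen_min_weight R V r"
    "r \<le> fs.dim (V \<inter> supported_on I)"
proof -
  obtain D where D: "fs.subspace D" "D \<subseteq> V" "fs.dim D = r"
    "gen_min_weight R V r = poset_weight R D"
    using gen_min_weight_attained N V(1) r by (metis preorder_on_def)
  let ?I = "ideal_gen R (supp_set D)"
  have "supp_set D \<subseteq> N" using D(2) V(2) by (simp add: supp_set_subset_iff)
  then have "D \<subseteq> supported_on ?I"
    using subset_ideal_gen[OF N(2)] by (simp flip: supp_set_subset_iff)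
  moreover have "finite V" using V(2) finite_supported_on[OF N(1)] finite_subset by blast
  ultimately have "r \<le> fs.dim (V \<inter> supported_on ?I)"
    using D(2,3) V(1) subspace_supported_on by (auto intro!: dim_subspace_mono fs.subspace_inter)
  then show thesis
    using that[OF order_ideal_ideal_gen[OF N(2)]] D(4) by (simp add: poset_weight_def)
qed

lemma gen_min_weight_bounds:
  fixes V :: "(nat \<Rightarrow> 'a::{finite,field}) set"
  assumes N: "finite N" "preorder_on N R" and V: "fs.subspace V" "V \<subseteq> supported_on N"
    and r: "1 \<le> r" "r \<le> fs.dim V"
  shows "1 \<le> gen_min_weight R V r \<and> gen_min_weight R V r \<le> card N"
proof -
  obtain I where I: "order_ideal N R I" "card I = gen_min_weight R V r"
    "r \<le> fs.dim (V \<inter> supported_on I)"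
    using gen_min_weight_attained_by_order_ideal[OF N V r(2)] .
  have "I \<noteq> {}" using I(3) r(1) dim_inter_supported_on_empty[OF V(1)] by auto
  moreover have "I \<subseteq> N" using I(1) by (simp add: order_ideal_def)
  ultimately show ?thesis
    using I(2) N(1) card_mono[OF N(1)] by (metis One_nat_def Suc_leI card_gt_0_iff finite_subset)
qed

lemma gen_min_weight_less_Suc:
  fixes V :: "(nat \<Rightarrow> 'a::{finite,field}) set"
  assumes N: "finite N" "partial_order_on N R" and V: "fs.subspace V" "V \<subseteq> supported_on N"
    and r: "r < fs.dim V"
  shows "gen_min_weight R V r < gen_min_weight R V (Suc r)"
proof -
  have pre: "preorder_on N R" using N(2) by (simp add: partial_order_on_def)
  obtain I where I: "order_ideal N R I" "card I = gen_min_weight R V (Suc r)"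
    "Suc r \<le> fs.dim (V \<inter> supported_on I)"
    using gen_min_weight_attained_by_order_ideal[OF N(1) pre V] r by (metis Suc_leI)
  have "finite I" using I(1) N(1) by (auto simp: order_ideal_def intro: finite_subset)
  moreover have "I \<noteq> {}" using I(3) dim_inter_supported_on_empty[OF V(1)] by auto
  ultimately obtain i where i: "i \<in> I" "\<forall>j\<in>I. (i, j) \<in> R \<longrightarrow> j = i"
    using finite_antisym_trans_has_maximal partial_order_onD[OF N(2)] by metis
  have "finite V" using V(2) finite_supported_on[OF N(1)] finite_subset by blast
  then have "fs.dim (V \<inter> supported_on I) \<le> fs.dim (V \<inter> supported_on (I - {i})) + 1"
    using dim_inter_supported_on_le[OF V(1), of "I - {i}" I] i(1) by (simp add: Diff_Diff_Int)
  then have "gen_min_weight R V r \<le> card (I - {i})"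
    using gen_min_weight_le_card[OF N(1) pre V(1) order_ideal_Diff_maximal[OF I(1) i]] I(3)
    by simp
  also have "\<dots> < card I" using \<open>finite I\<close> i(1) by (rule card_Diff1_less)
  finally show ?thesis using I(2) by simp
qed

lemma gen_min_weight_strict_mono:
  fixes V :: "(nat \<Rightarrow> 'a::{finite,field}) set"
  assumes "finite N" "partial_order_on N R" "fs.subspace V" "V \<subseteq> supported_on N"
  shows "strict_mono_on {..fs.dim V} (gen_min_weight R V)"
proof (rule strict_mono_onI)
  fix r s assume "r \<in> {..fs.dim V}" "s \<in> {..fs.dim V}" "r < s"
  then show "gen_min_weight R V r < gen_min_weight R V s"
  proof (induction s)
    case (Suc s)
    then have "gen_min_weight R V s < gen_min_weight R V (Suc s)"
      using gen_min_weight_less_Suc[OF assms] by simp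
    with Suc show ?case by (cases "r = s") auto
  qed simp
qed

lemma gen_min_weight_image:
  fixes V :: "(nat \<Rightarrow> 'a::{finite,field}) set"
  assumes "finite N" "partial_order_on N R" "fs.subspace V" "V \<subseteq> supported_on N"
  shows "gen_min_weight R V ` {1..fs.dim V} \<subseteq> {1..card N}"
    and "card (gen_min_weight R V ` {1..fs.dim V}) = fs.dim V"
proof -
  have "preorder_on N R" using assms(2) by (simp add: partial_order_on_def)
  then show "gen_min_weight R V ` {1..fs.dim V} \<subseteq> {1..card N}"
    using gen_min_weight_bounds[OF assms(1) _ assms(3,4)] by auto
  have "inj_on (gen_min_weight R V) {1..fs.dim V}"
    using strict_mono_on_imp_inj_on[OF gen_min_weight_strict_mono[OF assms]]
    by (rule inj_on_subset) auto
  then show "card (gen_min_weight R V ` {1..fs.dim V}) = fs.dim V"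
    by (simp add: card_image)
qed

lemma gen_min_weight_add_dual_neq:
  fixes C :: "(nat \<Rightarrow> 'a::{finite,field}) set"
  assumes C: "linear_code n C" and R: "preorder_on {1..n} R"
    and r: "r \<le> fs.dim C" and s: "s \<le> fs.dim (dual_code n C)"
  shows "gen_min_weight R C r + gen_min_weight (R\<inverse>) (dual_code n C) s \<noteq> n + 1"
proof
  let ?N = "{1..n}" and ?D = "dual_code n C"
  assume sum: "gen_min_weight R C r + gen_min_weight (R\<inverse>) ?D s = n + 1"
  have RN: "R \<subseteq> ?N \<times> ?N" "R\<inverse> \<subseteq> ?N \<times> ?N" using R by (auto simp: preorder_on_def)
  have C_sub: "fs.subspace C" "C \<subseteq> supported_on ?N"
    using C by (auto simp: linear_code_def ambient_eq_supported_on)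
  note D_sub = subspace_dual_code[of n C] dual_code_subset_supported_on[of n C]
  obtain I where I: "order_ideal ?N R I" "card I = gen_min_weight R C r"
    "r \<le> fs.dim (C \<inter> supported_on I)"
    using gen_min_weight_attained_by_order_ideal[OF _ R C_sub r] by blast
  obtain J where J: "order_ideal ?N (R\<inverse>) J" "card J = gen_min_weight (R\<inverse>) ?D s"
    "s \<le> fs.dim (?D \<inter> supported_on J)"
    using gen_min_weight_attained_by_order_ideal[OF _ _ D_sub s] R
      preorder_on_converse[of ?N R] by blast
  have card_compl: "card (?N - I) + card I = n" "card (?N - J) + card J = n"
    using I(1) J(1) card_mono[of ?N I] card_mono[of ?N J]
    by (auto simp: order_ideal_def card_Diff_subset finite_subset)
  have "fs.dim (?D \<inter> supported_on (?N - I)) < s"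
  proof (rule ccontr)
    assume "\<not> ?thesis"
    then have "gen_min_weight (R\<inverse>) ?D s \<le> card (?N - I)"
      using gen_min_weight_le_card[OF _ _ D_sub(1) order_ideal_Diff_converse[OF RN(1) I(1)]] R
      by simp
    then show False using sum I(2) card_compl by linarith
  qed
  moreover have "fs.dim (C \<inter> supported_on (?N - J)) < r"
  proof (rule ccontr)
    assume "\<not> ?thesis"
    then have "gen_min_weight R C r \<le> card (?N - J)"
      using gen_min_weight_le_card[OF _ R C_sub(1)] order_ideal_Diff_converse[OF RN(2) J(1)]
      by simp
    then show False using sum J(2) card_compl by linarith
  qed
  moreover have "fs.dim (?D \<inter> supported_on (?N - I)) + fs.dim C
      = card (?N - I) + fs.dim (C \<inter> supported_on I)"
    using dim_dual_code_inter_supported_on[OF C, of "?N - I"] I(1)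
    by (simp add: order_ideal_def Diff_Diff_Int Int_absorb1)
  moreover have "fs.dim (?D \<inter> supported_on J) + fs.dim C
      = card J + fs.dim (C \<inter> supported_on (?N - J))"
    using dim_dual_code_inter_supported_on[OF C] J(1) by (simp add: order_ideal_def)
  ultimately show False using I J sum card_compl by linarith
qed

theorem theorem3:
  fixes C :: "(nat \<Rightarrow> 'a::{finite, field}) set"
    and n k :: nat
    and R :: "nat rel"
  assumes "linear_code n C"
    and "code_dim C = k"
    and "partial_order_on {1..n} R"
  shows "(\<lambda>r. gen_min_weight R C r) ` {1..k}
           \<inter> (\<lambda>s. n + 1 - gen_min_weight (R\<inverse>) (dual_code n C) s) ` {1..n-k} = {}
      \<and> {1..n} = (\<lambda>r. gen_min_weight R C r) ` {1..k}
           \<union> (\<lambda>s. n + 1 - gen_min_weight (R\<inverse>) (dual_code n C) s) ` {1..n-k}"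
proof -
  let ?N = "{1..n}" and ?D = "dual_code n C" and ?flip = "\<lambda>x. n + 1 - x"
  let ?A = "gen_min_weight R C ` {1..k}" and ?B = "gen_min_weight (R\<inverse>) ?D ` {1..n - k}"
  have C: "fs.subspace C" "C \<subseteq> supported_on ?N"
    using assms(1) by (auto simp: linear_code_def ambient_eq_supported_on)
  note D = subspace_dual_code[of n C] dual_code_subset_supported_on[of n C]
  have dims: "fs.dim C = k" "fs.dim ?D = n - k" "k \<le> n"
    using assms(2) dim_dual_code[OF assms(1)] by (auto simp: code_dim_def)
  have A: "?A \<subseteq> ?N" "card ?A = k"
    using gen_min_weight_image[OF _ assms(3) C] dims by auto
  have B: "?B \<subseteq> ?N" "card ?B = n - k"
    using gen_min_weight_image[OF _ _ D] assms(3) partial_order_on_converse[of ?N R] dims by auto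
  have flip: "inj_on ?flip ?N" "?flip ` ?N \<subseteq> ?N" by (auto simp: inj_on_def)
  have flip_B: "(\<lambda>s. n + 1 - gen_min_weight (R\<inverse>) ?D s) ` {1..n - k} = ?flip ` ?B"
    by (simp add: image_image)
  have disjoint: "?A \<inter> ?flip ` ?B = {}"
    using gen_min_weight_add_dual_neq[OF assms(1), of R] assms(3) A(1) B(1) dims
    by (fastforce simp: partial_order_on_def)
  have "?A \<union> ?flip ` ?B \<subseteq> ?N" using A(1) image_mono[OF B(1), of ?flip] flip(2) by blast
  moreover have "card (?A \<union> ?flip ` ?B) = card ?N"
    using disjoint A B card_image[OF inj_on_subset[OF flip(1) B(1)]] dims
    by (simp add: card_Un_disjoint)
  ultimately have "?A \<union> ?flip ` ?B = ?N" by (rule card_subset_eq[OF finite_atLeastAtMost])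
  with disjoint flip_B show ?thesis by simp
qed

end
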